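(* Let $N\ge 2$ units $i=1,\dots,N$ be observed at times $t=-L,\dots,0,1$ with binary treatment $A_i$ applied at $t=1$, and suppose potential outcomes satisfy $$Y_{it}(0)-Y_{i,t-1}(0)=\delta_t+\epsilon_{it,0},\qquad Y_{it}(1)-Y_{it}(0)=\mathbb{I}(t=1)(\psi+\epsilon_{it,1}),$$ so that the unit effect is $\psi_i=Y_{i1}(1)-Y_{i1}(0)=\psi+\epsilon_{i1,1}$. Assume $Y_{it}=\mathbb{I}(t=1)A_iY_{it}(1)+(1-\mathbb{I}(t=1)A_i)Y_{it}(0)$, that $1\le\sum_iA_i\le N-1$, and that $|\epsilon_{it,a}|\le\zeta$ for all $i,t$ and $a\in\{0,1\}$. Define $\hat\psi_i^{DiD}=Y_{i1}-\hat Y_{i1}(0)$ if $A_i=1$, where $\hat Y_{i1}(0)=Y_{i0}+[\sum_j(1-A_j)]^{-1}\sum_j(1-A_j)(Y_{j1}-Y_{j0})$, and $\hat\psi_i^{DiD}=\hat Y_{i1}(1)-Y_{i1}$ if $A_i=0$, where $\hat Y_{i1}(1)=Y_{i0}+[\sum_jA_j]^{-1}\sum_jA_j(Y_{j1}-Y_{j0})$. Let $\tilde\tau_i=\{\tau\ge 0:\psi_i\in[\hat\psi_i^{DiD}-\tau,\hat\psi_i^{DiD}+\tau]\}$. Then for every treated unit $i$ ($A_i=1$), every $q_0\ge 2\zeta$ lies in $\tilde\tau_i$; and for every untreated unit $i$ ($A_i=0$), every $q_1\ge 4\zeta$ lies in $\tilde\tau_i$. *)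

theory Defs
  imports Complex_Main
begin

text \<open>Units are indexed by i in {1..N} (nat), times t by int.
  A i :: bool is the treatment indicator (True = treated).
  Potential outcomes: Y0 i t = Y_{it}(0), Y1 i t = Y_{it}(1).\<close>

definition ind :: "bool \<Rightarrow> real" where
  "ind b = (if b then 1 else 0)"

definition Yobs :: "(nat \<Rightarrow> bool) \<Rightarrow> (nat \<Rightarrow> int \<Rightarrow> real) \<Rightarrow> (nat \<Rightarrow> int \<Rightarrow> real) \<Rightarrow> nat \<Rightarrow> int \<Rightarrow> real" where
  "Yobs A Y0 Y1 i t = ind (t = 1) * ind (A i) * Y1 i t + (1 - ind (t = 1) * ind (A i)) * Y0 i t"

definition hatY0 :: "nat \<Rightarrow> (nat \<Rightarrow> bool) \<Rightarrow> (nat \<Rightarrow> int \<Rightarrow> real) \<Rightarrow> nat \<Rightarrow> real" where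
  "hatY0 N A Y i = Y i 0 + inverse (\<Sum>j\<in>{1..N}. 1 - ind (A j)) *
      (\<Sum>j\<in>{1..N}. (1 - ind (A j)) * (Y j 1 - Y j 0))"

definition hatY1 :: "nat \<Rightarrow> (nat \<Rightarrow> bool) \<Rightarrow> (nat \<Rightarrow> int \<Rightarrow> real) \<Rightarrow> nat \<Rightarrow> real" where
  "hatY1 N A Y i = Y i 0 + inverse (\<Sum>j\<in>{1..N}. ind (A j)) *
      (\<Sum>j\<in>{1..N}. ind (A j) * (Y j 1 - Y j 0))"

definition psi_hat_DiD :: "nat \<Rightarrow> (nat \<Rightarrow> bool) \<Rightarrow> (nat \<Rightarrow> int \<Rightarrow> real) \<Rightarrow> nat \<Rightarrow> real" where
  "psi_hat_DiD N A Y i = (if A i then Y i 1 - hatY0 N A Y i else hatY1 N A Y i - Y i 1)"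

definition tau_tilde :: "real \<Rightarrow> real \<Rightarrow> real set" where
  "tau_tilde psi_i psihat = {\<tau>. \<tau> \<ge> 0 \<and> psi_i \<in> {psihat - \<tau> .. psihat + \<tau>}}"

end

theory Submission
  imports Defs
begin

text \<open>Under the model the observed change of unit j from time 0 to time 1 is
  \<open>\<delta> 1 + eps0 j 1\<close> for a control and \<open>\<delta> 1 + \<psi> + eps0 j 1 + eps1 j 1\<close> for a treated
  unit. Each imputation adds to \<open>Y i 0\<close> a weighted mean of these changes over the opposite
  group, so it misses \<open>\<delta> 1\<close> by at most \<open>\<zeta>\<close>, resp. \<open>\<delta> 1 + \<psi>\<close> by at most \<open>2\<zeta>\<close>.
  What remains is unit i's own noise: \<open>eps0 i 1\<close> for a treated unit, and
  \<open>eps0 i 1 + eps1 i 1\<close> for a control unit, whose treated outcome is unobserved.\<close>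

lemma mem_tau_tilde_iff: "\<tau> \<in> tau_tilde p h \<longleftrightarrow> 0 \<le> \<tau> \<and> \<bar>p - h\<bar> \<le> \<tau>"
  by (auto simp: tau_tilde_def)

lemma weighted_mean_dist_le:
  fixes w x :: "'a \<Rightarrow> real"
  assumes "finite I" "sum w I > 0"
    and "\<And>j. j \<in> I \<Longrightarrow> w j \<ge> 0"
    and "\<And>j. j \<in> I \<Longrightarrow> w j \<noteq> 0 \<Longrightarrow> \<bar>x j - m\<bar> \<le> c"
  shows "\<bar>inverse (sum w I) * (\<Sum>j\<in>I. w j * x j) - m\<bar> \<le> c"
proof -
  have "\<bar>\<Sum>j\<in>I. w j * (x j - m)\<bar> \<le> (\<Sum>j\<in>I. w j * \<bar>x j - m\<bar>)"
    using sum_abs[of "\<lambda>j. w j * (x j - m)" I] assms(3) by (simp add: abs_mult)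
  also have "\<dots> \<le> (\<Sum>j\<in>I. w j * c)"
    using assms(3,4) by (intro sum_mono) (metis mult_left_mono mult_zero_left)
  also have "\<dots> = sum w I * c"
    by (simp add: sum_distrib_right)
  finally have "\<bar>(\<Sum>j\<in>I. w j * x j) - sum w I * m\<bar> \<le> sum w I * c"
    by (simp add: right_diff_distrib sum_subtractf sum_distrib_right)
  moreover have "inverse (sum w I) * (\<Sum>j\<in>I. w j * x j) - m
      = ((\<Sum>j\<in>I. w j * x j) - sum w I * m) / sum w I"
    using assms(2) by (simp add: field_simps)
  ultimately show ?thesis
    using assms(2) by (simp add: pos_divide_le_eq mult.commute)
qed

lemma abs_hatY0_sub_le:
  assumes "(\<Sum>j\<in>{1..N}. 1 - ind (A j)) > 0"
    and "\<And>j. j \<in> {1..N} \<Longrightarrow> \<not> A j \<Longrightarrow> \<bar>Y j 1 - Y j 0 - d\<bar> \<le> c"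
  shows "\<bar>hatY0 N A Y i - Y i 0 - d\<bar> \<le> c"
  unfolding hatY0_def add_diff_cancel_left'
  using assms by (intro weighted_mean_dist_le) (auto simp: ind_def split: if_splits)

lemma abs_hatY1_sub_le:
  assumes "(\<Sum>j\<in>{1..N}. ind (A j)) > 0"
    and "\<And>j. j \<in> {1..N} \<Longrightarrow> A j \<Longrightarrow> \<bar>Y j 1 - Y j 0 - d\<bar> \<le> c"
  shows "\<bar>hatY1 N A Y i - Y i 0 - d\<bar> \<le> c"
  unfolding hatY1_def add_diff_cancel_left'
  using assms by (intro weighted_mean_dist_le) (auto simp: ind_def split: if_splits)

lemma Yobs_at_1: "Yobs A Y0 Y1 i 1 = (if A i then Y1 i 1 else Y0 i 1)"
  by (simp add: Yobs_def ind_def)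

lemma Yobs_at_0: "Yobs A Y0 Y1 i 0 = Y0 i 0"
  by (simp add: Yobs_def ind_def)

theorem proposition5:
  fixes N L :: nat
    and A :: "nat \<Rightarrow> bool"
    and Y0 Y1 :: "nat \<Rightarrow> int \<Rightarrow> real"
    and \<delta> :: "int \<Rightarrow> real"
    and \<psi> \<zeta> :: real
    and eps0 eps1 :: "nat \<Rightarrow> int \<Rightarrow> real"
  assumes N2: "N \<ge> 2"
    and model0: "\<And>i t. i \<in> {1..N} \<Longrightarrow> t \<in> {- int L + 1 .. 1} \<Longrightarrow>
                   Y0 i t - Y0 i (t - 1) = \<delta> t + eps0 i t"
    and model1: "\<And>i t. i \<in> {1..N} \<Longrightarrow> t \<in> {- int L .. 1} \<Longrightarrow>
                   Y1 i t - Y0 i t = ind (t = 1) * (\<psi> + eps1 i t)"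
    and treat_pos: "1 \<le> (\<Sum>i\<in>{1..N}. ind (A i))"
    and treat_lt: "(\<Sum>i\<in>{1..N}. ind (A i)) \<le> real N - 1"
    and bnd0: "\<And>i t. i \<in> {1..N} \<Longrightarrow> t \<in> {- int L .. 1} \<Longrightarrow> \<bar>eps0 i t\<bar> \<le> \<zeta>"
    and bnd1: "\<And>i t. i \<in> {1..N} \<Longrightarrow> t \<in> {- int L .. 1} \<Longrightarrow> \<bar>eps1 i t\<bar> \<le> \<zeta>"
  shows "(\<forall>i\<in>{1..N}. A i \<longrightarrow> (\<forall>q0. q0 \<ge> 2 * \<zeta> \<longrightarrow>
            q0 \<in> tau_tilde (Y1 i 1 - Y0 i 1) (psi_hat_DiD N A (Yobs A Y0 Y1) i)))
       \<and> (\<forall>i\<in>{1..N}. \<not> A i \<longrightarrow> (\<forall>q1. q1 \<ge> 4 * \<zeta> \<longrightarrow>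
            q1 \<in> tau_tilde (Y1 i 1 - Y0 i 1) (psi_hat_DiD N A (Yobs A Y0 Y1) i)))"
proof -
  let ?Y = "Yobs A Y0 Y1"
  have trend0: "Y0 j 1 - Y0 j 0 = \<delta> 1 + eps0 j 1" and eff: "Y1 j 1 - Y0 j 1 = \<psi> + eps1 j 1"
    and noise: "\<bar>eps0 j 1\<bar> \<le> \<zeta>" "\<bar>eps1 j 1\<bar> \<le> \<zeta>" if "j \<in> {1..N}" for j
    using model0[OF that, of 1] model1[OF that, of 1] bnd0[OF that, of 1] bnd1[OF that, of 1]
    by (auto simp: ind_def)
  have controls: "(\<Sum>j\<in>{1..N}. 1 - ind (A j)) > 0"
    using treat_lt by (simp add: sum_subtractf)
  have hatY0: "\<bar>hatY0 N A ?Y i - ?Y i 0 - \<delta> 1\<bar> \<le> \<zeta>" for i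
    using controls trend0 noise
    by (intro abs_hatY0_sub_le) (auto simp: Yobs_at_0 Yobs_at_1)
  have hatY1: "\<bar>hatY1 N A ?Y i - ?Y i 0 - (\<delta> 1 + \<psi>)\<bar> \<le> 2 * \<zeta>" for i
  proof (rule abs_hatY1_sub_le)
    fix j assume "j \<in> {1..N}" "A j"
    then show "\<bar>?Y j 1 - ?Y j 0 - (\<delta> 1 + \<psi>)\<bar> \<le> 2 * \<zeta>"
      using trend0 eff noise by (fastforce simp: Yobs_at_0 Yobs_at_1)
  qed (use treat_pos in simp)
  show ?thesis
  proof (intro conjI ballI impI allI)
    fix i q assume i: "i \<in> {1..N}" and "A i" and "2 * \<zeta> \<le> q"
    then show "q \<in> tau_tilde (Y1 i 1 - Y0 i 1) (psi_hat_DiD N A ?Y i)"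
      using hatY0[of i] trend0[OF i] noise[OF i]
      by (auto simp: mem_tau_tilde_iff psi_hat_DiD_def Yobs_at_0 Yobs_at_1 abs_le_iff)
  next
    fix i q assume i: "i \<in> {1..N}" and "\<not> A i" and "4 * \<zeta> \<le> q"
    then show "q \<in> tau_tilde (Y1 i 1 - Y0 i 1) (psi_hat_DiD N A ?Y i)"
      using hatY1[of i] trend0[OF i] eff[OF i] noise[OF i]
      by (auto simp: mem_tau_tilde_iff psi_hat_DiD_def Yobs_at_0 Yobs_at_1 abs_le_iff)
  qed
qed

end
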